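(* Let $r \in \mathbb{Q}_{>0}$ be such that $S_r$ is atomic. Then the set of elasticities $R(S_r)$ is dense in $\mathbb{R}_{\ge 1}$ if and only if $r \in \mathbb{Q}_{>1} \setminus \mathbb{N}$.
   Context: For $q \in \mathbb{Q}_{>0}$, $\mathsf{n}(q),\mathsf{d}(q)$ are the positive coprime integers with $q = \mathsf{n}(q)/\mathsf{d}(q)$. $S_r$ is the additive submonoid of $(\mathbb{Q}_{\ge 0},+)$ generated by $\{r^n : n \in \mathbb{N}_0\}$; it is atomic exactly when $r=1$ or $\mathsf{n}(r)>1$. $\mathsf{L}(x)$ denotes the set of lengths of factorizations of $x$ into atoms. The elasticity of $x \ne 0$ is $\rho(x) = \sup \mathsf{L}(x)/\inf \mathsf{L}(x) \in \mathbb{Q}_{\ge 1}\cup\{\infty\}$, $\rho(0)=1$, and $R(S_r) = \{\rho(x) : x \in S_r\}$ (density is understood for $R(S_r) \setminus \{\infty\}$ as a subset of $\mathbb{R}_{\ge 1}$). *)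

theory Defs
  imports Complex_Main "HOL-Library.Multiset" "HOL-Library.Extended_Real"
begin

inductive_set Sr :: "rat \<Rightarrow> rat set" for r :: rat where
  zero: "0 \<in> Sr r"
| add_pow: "x \<in> Sr r \<Longrightarrow> x + r ^ n \<in> Sr r"

text \<open>Atoms of a submonoid S of (Q_{\<ge>0},+): nonzero elements that are not a sum of two nonzero elements
 (the only unit is 0).\<close>
definition atoms :: "rat set \<Rightarrow> rat set" where
  "atoms S = {a \<in> S. a \<noteq> 0 \<and> \<not> (\<exists>b\<in>S. \<exists>c\<in>S. b \<noteq> 0 \<and> c \<noteq> 0 \<and> a = b + c)}"

definition factorizations :: "rat set \<Rightarrow> rat \<Rightarrow> rat multiset set" where
  "factorizations S x = {m. set_mset m \<subseteq> atoms S \<and> sum_mset m = x}"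

definition atomic_monoid :: "rat set \<Rightarrow> bool" where
  "atomic_monoid S \<longleftrightarrow> (\<forall>x\<in>S. x \<noteq> 0 \<longrightarrow> factorizations S x \<noteq> {})"

definition lengths :: "rat set \<Rightarrow> rat \<Rightarrow> nat set" where
  "lengths S x = size ` factorizations S x"

definition elasticity :: "rat set \<Rightarrow> rat \<Rightarrow> ereal" where
  "elasticity S x = (if x = 0 then 1
     else (SUP l\<in>lengths S x. ereal (real l)) / (INF l\<in>lengths S x. ereal (real l)))"

definition elasticity_set :: "rat set \<Rightarrow> ereal set" where
  "elasticity_set S = elasticity S ` S"

definition dense_in_ge1 :: "real set \<Rightarrow> bool" where
  "dense_in_ge1 A \<longleftrightarrow> (\<forall>a b. 1 \<le> a \<and> a < b \<longrightarrow> (\<exists>x\<in>A. a < x \<and> x < b))"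

end

theory Submission
  imports Defs
begin

(* Write r = P/Q in lowest terms. Factorizations in S_r are multisets of powers of r, and the
   exchange P r^n = Q r^(n+1) turns one factorization into another, changing its length by Q - P.
   Clearing denominators turns a factorization into a digit expansion, and coprimality of P and Q
   makes it unique once all digits are below P, or all digits at positive exponents are below Q.
   For r > 1 not an integer every power of r is an atom; the two normal forms are then the shortest
   and the longest factorization, and adding L distinct large powers to the two normal forms of P^k
   gives the elasticities (P^k + L)/(m + L) with m <= Q^k, which are dense in [1, oo).
   For r in N the only atom is 1, so all elasticities are 1. For r < 1 either some factorization has
   a digit >= P, and repeated exchanges make factorizations arbitrarily long, or the factorization
   is unique; so all elasticities are 1 or oo. *)

lemma coprime_cancel_digit:
  fixes m c a b X Y :: nat
  assumes "coprime m c" "a < m" "b < m" "a * c + m * X = b * c + m * Y"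
  shows "a = b"
proof -
  have "(int a - int b) * int c = int m * (int Y - int X)"
    using arg_cong[OF assms(4), of int] by (simp add: algebra_simps)
  then have "int m dvd (int a - int b) * int c" by simp
  then have "int m dvd int a - int b"
    using assms(1) by (simp add: coprime_dvd_mult_left_iff)
  then have "int a mod int m = int b mod int m" by (simp add: mod_eq_dvd_iff)
  then show ?thesis using assms(2,3) by simp
qed

(* horner_num P Q a K = (SUM n<K. a n * P^n * Q^(K-1-n)), the numerator of
   (SUM n<K. a n * (P/Q)^n) over the denominator Q^(K-1) *)
fun horner_num :: "nat \<Rightarrow> nat \<Rightarrow> (nat \<Rightarrow> nat) \<Rightarrow> nat \<Rightarrow> nat" where
  "horner_num P Q a 0 = 0"
| "horner_num P Q a (Suc K) = Q * horner_num P Q a K + a K * P ^ K"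

lemma horner_num_eq_scaled_sum:
  assumes "Q > 0"
  shows "(of_nat Q :: 'a :: field_char_0) ^ K * (\<Sum>n<K. of_nat (a n) * (of_nat P / of_nat Q) ^ n)
           = of_nat (Q * horner_num P Q a K)"
proof (induction K)
  case (Suc K)
  have "(of_nat Q :: 'a) * (of_nat P / of_nat Q) = of_nat P" using assms by simp
  then have "(of_nat Q :: 'a) ^ K * (of_nat P / of_nat Q) ^ K = of_nat P ^ K"
    by (simp only: power_mult_distrib[symmetric])
  with Suc show ?case by (simp add: algebra_simps)
qed simp

lemma horner_num_Suc_split: "horner_num P Q a (Suc K) = a 0 * Q ^ K + P * horner_num P Q (\<lambda>n. a (Suc n)) K"
  by (induction K) (simp_all add: algebra_simps)

lemma horner_num_low_digits_unique:
  assumes "coprime P Q" "\<forall>n<K. a n < P \<and> b n < P" "horner_num P Q a K = horner_num P Q b K"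
  shows "\<forall>n<K. a n = b n"
  using assms(2-)
proof (induction K arbitrary: a b)
  case (Suc K)
  let ?a' = "\<lambda>n. a (Suc n)" and ?b' = "\<lambda>n. b (Suc n)"
  have eq: "a 0 * Q ^ K + P * horner_num P Q ?a' K = b 0 * Q ^ K + P * horner_num P Q ?b' K"
    using Suc.prems(2) by (simp only: horner_num_Suc_split)
  have "coprime P (Q ^ K)" using assms(1) by simp
  then have a0: "a 0 = b 0"
    using Suc.prems(1) by (intro coprime_cancel_digit[OF _ _ _ eq]) auto
  moreover have "P > 0" using Suc.prems(1) by auto
  ultimately have "horner_num P Q ?a' K = horner_num P Q ?b' K"
    using eq by simp
  moreover have "\<forall>n<K. ?a' n < P \<and> ?b' n < P" using Suc.prems(1) by simp
  ultimately have "\<forall>n<K. a (Suc n) = b (Suc n)" using Suc.IH[of ?a' ?b'] by blast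
  with a0 show ?case by (auto simp: less_Suc_eq_0_disj)
qed simp

lemma horner_num_high_digits_unique:
  assumes "coprime P Q" "\<forall>n<K. 0 < n \<longrightarrow> a n < Q \<and> b n < Q"
    "horner_num P Q a K = horner_num P Q b K"
  shows "\<forall>n<K. a n = b n"
  using assms(2-)
proof (induction K)
  case (Suc K)
  show ?case
  proof (cases "K = 0")
    case False
    have eq: "a K * P ^ K + Q * horner_num P Q a K = b K * P ^ K + Q * horner_num P Q b K"
      using Suc.prems(2) by (simp add: add.commute)
    have "coprime Q (P ^ K)" using assms(1) by (simp add: coprime_commute)
    then have aK: "a K = b K"
      using Suc.prems(1) False by (intro coprime_cancel_digit[OF _ _ _ eq]) auto
    moreover have "Q > 0" using Suc.prems(1) False by auto
    ultimately have "horner_num P Q a K = horner_num P Q b K"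
      using eq by simp
    moreover have "\<forall>n<K. 0 < n \<longrightarrow> a n < Q \<and> b n < Q" using Suc.prems(1) by simp
    ultimately have "\<forall>n<K. a n = b n" using Suc.IH by blast
    with aK show ?thesis by (auto simp: less_Suc_eq)
  qed (use Suc.prems(2) in simp)
qed simp

lemma sum_mset_nonneg: "(\<And>y. y \<in># M \<Longrightarrow> 0 \<le> y) \<Longrightarrow> 0 \<le> sum_mset (M :: 'a :: ordered_comm_monoid_add multiset)"
  by (induction M) auto

lemma member_le_sum_mset:
  fixes M :: "'a :: ordered_comm_monoid_add multiset"
  assumes "y \<in># M" "\<And>z. z \<in># M \<Longrightarrow> 0 \<le> z"
  shows "y \<le> sum_mset M"
proof -
  obtain M' where M: "M = add_mset y M'" using multi_member_split[OF assms(1)] by blast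
  have "0 \<le> sum_mset M'" using assms(2) M by (intro sum_mset_nonneg) auto
  then show ?thesis using M by (simp add: add_increasing2)
qed

lemma size_le_sum_mset: "(\<And>y. y \<in># M \<Longrightarrow> 1 \<le> y) \<Longrightarrow> of_nat (size M) \<le> sum_mset (M :: rat multiset)"
  by (induction M) (auto simp: add_mono)

lemma Sr_eq_sums: "Sr r = {sum_mset M | M. set_mset M \<subseteq> range (power r)}"
proof (intro set_eqI iffI)
  fix x assume "x \<in> Sr r"
  then show "x \<in> {sum_mset M | M. set_mset M \<subseteq> range (power r)}"
  proof (induction rule: Sr.induct)
    case zero
    show ?case by (auto intro!: exI[of _ "{#}"])
  next
    case (add_pow x n)
    then obtain M where "set_mset M \<subseteq> range (power r)" "x = sum_mset M" by blast
    then show ?case by (auto intro!: exI[of _ "add_mset (r ^ n) M"])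
  qed
next
  fix x assume "x \<in> {sum_mset M | M. set_mset M \<subseteq> range (power r)}"
  then obtain M where "set_mset M \<subseteq> range (power r)" "x = sum_mset M" by blast
  then show "x \<in> Sr r"
  proof (induction M arbitrary: x)
    case empty
    then show ?case by (simp add: Sr.zero)
  next
    case (add y M)
    then obtain n where "y = r ^ n" by auto
    with add show ?case using Sr.add_pow[of "sum_mset M" r n] by (simp add: add.commute)
  qed
qed

lemma sum_mset_in_Sr: "set_mset M \<subseteq> range (power r) \<Longrightarrow> sum_mset M \<in> Sr r"
  by (auto simp: Sr_eq_sums)

lemma of_nat_mult_power_in_Sr: "of_nat k * r ^ n \<in> Sr r"
  using sum_mset_in_Sr[of "replicate_mset k (r ^ n)" r] by simp

lemma power_in_Sr: "r ^ n \<in> Sr r"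
  using of_nat_mult_power_in_Sr[of 1] by simp

lemma Sr_nonneg: "x \<in> Sr r \<Longrightarrow> 0 \<le> r \<Longrightarrow> 0 \<le> x"
  by (induction rule: Sr.induct) simp_all

lemma atoms_Sr_subset_powers:
  assumes "r > 0"
  shows "atoms (Sr r) \<subseteq> range (power r)"
proof
  fix a assume a: "a \<in> atoms (Sr r)"
  then obtain M where M: "set_mset M \<subseteq> range (power r)" "sum_mset M = a"
    by (auto simp: atoms_def Sr_eq_sums)
  with a have "M \<noteq> {#}" by (auto simp: atoms_def)
  then obtain y M' where yM: "M = add_mset y M'" by (metis multiset_cases)
  have "M' = {#}"
  proof (rule ccontr)
    assume "M' \<noteq> {#}"
    then obtain z where z: "z \<in># M'" by blast
    have pos: "\<And>w. w \<in># M \<Longrightarrow> 0 < w" using M assms by auto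
    then have "z \<le> sum_mset M'" using z yM by (intro member_le_sum_mset) (auto intro: less_imp_le)
    moreover have "0 < z" "0 < y" using pos z yM by auto
    moreover have "y \<in> Sr r" "sum_mset M' \<in> Sr r"
      using M yM sum_mset_in_Sr[of "{#y#}" r] sum_mset_in_Sr[of M' r] by auto
    ultimately show False using a M yM unfolding atoms_def by fastforce
  qed
  with M yM show "a \<in> range (power r)" by auto
qed

lemma power_in_atoms_SrI:
  assumes "r > 0"
    and no_split: "\<And>M. set_mset M \<subseteq> range (power r) \<Longrightarrow> sum_mset M = r ^ n \<Longrightarrow> M \<noteq> {#}
                   \<Longrightarrow> (\<forall>y\<in>#M. y < r ^ n) \<Longrightarrow> False"
  shows "r ^ n \<in> atoms (Sr r)"
proof -
  have "False" if bc: "b \<in> Sr r" "c \<in> Sr r" "b \<noteq> 0" "c \<noteq> 0" "r ^ n = b + c" for b c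
  proof -
    obtain Mb Mc where Mb: "set_mset Mb \<subseteq> range (power r)" "sum_mset Mb = b"
      and Mc: "set_mset Mc \<subseteq> range (power r)" "sum_mset Mc = c"
      using bc(1,2) by (auto simp: Sr_eq_sums)
    have pos: "0 < b" "0 < c" using bc Sr_nonneg assms(1) by (auto simp: order_le_less less_imp_le)
    have "y < r ^ n" if "y \<in># Mb + Mc" for y
    proof -
      have nonneg: "\<And>z. z \<in># Mb + Mc \<Longrightarrow> 0 \<le> z" using Mb Mc assms by auto
      from that have "y \<le> b \<or> y \<le> c"
        using member_le_sum_mset[of y Mb] member_le_sum_mset[of y Mc] nonneg Mb Mc by auto
      then show ?thesis using pos bc(5) by auto
    qed
    moreover have "Mb + Mc \<noteq> {#}" using Mb bc(3) by auto
    ultimately show False using no_split[of "Mb + Mc"] Mb Mc bc(5) by auto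
  qed
  then show ?thesis using power_in_Sr[of r n] assms(1) by (auto simp: atoms_def)
qed

lemma factorization_Sr_powers:
  assumes "r > 0" "f \<in> factorizations (Sr r) x"
  shows "set_mset f \<subseteq> range (power r)" "sum_mset f = x"
  using assms atoms_Sr_subset_powers[OF assms(1)] by (auto simp: factorizations_def)

lemma factorization_nonempty: "f \<in> factorizations S x \<Longrightarrow> x \<noteq> 0 \<Longrightarrow> 0 < size f"
  by (cases f) (auto simp: factorizations_def)

lemma factorization_exchange:
  assumes "f \<in> factorizations S x" "k \<le> count f y" "of_nat k * y = of_nat l * z" "z \<in> atoms S"
  defines "f' \<equiv> f - replicate_mset k y + replicate_mset l z"
  shows "f' \<in> factorizations S x" "size f' + k = size f + l"
proof -
  have sub: "replicate_mset k y \<subseteq># f" using assms(2) by (simp add: count_le_replicate_mset_subset_eq)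
  then have "sum_mset f = sum_mset (f - replicate_mset k y) + of_nat k * y"
    by (metis subset_mset.diff_add sum_mset.union sum_mset_replicate_mset)
  moreover have "set_mset (f - replicate_mset k y) \<subseteq> set_mset f" by (auto dest: in_diffD)
  ultimately show "f' \<in> factorizations S x"
    using assms unfolding factorizations_def by (auto simp: algebra_simps)
  show "size f' + k = size f + l"
    using size_Diff_submset[OF sub] size_mset_mono[OF sub] unfolding f'_def by simp
qed

lemma elasticity_eq_ratio:
  assumes "x \<noteq> 0" "f \<in> factorizations S x" "g \<in> factorizations S x"
    and "\<And>h. h \<in> factorizations S x \<Longrightarrow> size f \<le> size h \<and> size h \<le> size g"
  shows "elasticity S x = ereal (real (size g) / real (size f))"
proof -
  have "(SUP l\<in>lengths S x. ereal (real l)) = ereal (real (size g))"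
  proof (rule antisym)
    show "(SUP l\<in>lengths S x. ereal (real l)) \<le> ereal (real (size g))"
      using assms(4) unfolding lengths_def by (auto intro!: SUP_least)
    show "ereal (real (size g)) \<le> (SUP l\<in>lengths S x. ereal (real l))"
      using assms(3) unfolding lengths_def by (auto intro!: SUP_upper)
  qed
  moreover have "(INF l\<in>lengths S x. ereal (real l)) = ereal (real (size f))"
  proof (rule antisym)
    show "ereal (real (size f)) \<le> (INF l\<in>lengths S x. ereal (real l))"
      using assms(4) unfolding lengths_def by (auto intro!: INF_greatest)
    show "(INF l\<in>lengths S x. ereal (real l)) \<le> ereal (real (size f))"
      using assms(2) unfolding lengths_def by (auto intro!: INF_lower)
  qed
  moreover have "size f \<noteq> 0" using factorization_nonempty[OF assms(2,1)] by linarith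
  ultimately show ?thesis using assms(1) by (simp add: elasticity_def)
qed

lemma elasticity_eq_one:
  assumes "x \<noteq> 0" "f \<in> factorizations S x" "\<And>h. h \<in> factorizations S x \<Longrightarrow> size h = size f"
  shows "elasticity S x = 1"
proof -
  have "elasticity S x = ereal (real (size f) / real (size f))"
    using assms(1,2) by (intro elasticity_eq_ratio) (auto dest: assms(3))
  moreover have "size f \<noteq> 0" using factorization_nonempty[OF assms(2,1)] by linarith
  ultimately show ?thesis by (simp add: one_ereal_def)
qed

lemma elasticity_eq_infinity:
  assumes "x \<noteq> 0" "f \<in> factorizations S x" "\<And>N. \<exists>h\<in>factorizations S x. N \<le> size h"
  shows "elasticity S x = \<infinity>"
proof -
  have "(SUP l\<in>lengths S x. ereal (real l)) = \<infinity>"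
  proof (rule SUP_PInfty)
    fix N :: nat
    from assms(3) obtain h where "h \<in> factorizations S x" "N \<le> size h" by blast
    then show "\<exists>l\<in>lengths S x. ereal (real N) \<le> ereal (real l)"
      unfolding lengths_def by (intro bexI[of _ "size h"]) auto
  qed
  moreover define I where "I = (INF l\<in>lengths S x. ereal (real l))"
  have "1 \<le> I"
    unfolding I_def lengths_def using factorization_nonempty assms(1) by (force intro!: INF_greatest)
  moreover have "I \<le> ereal (real (size f))"
    unfolding I_def lengths_def using assms(2) by (auto intro!: INF_lower)
  ultimately show ?thesis
    using assms(1) unfolding elasticity_def I_def[symmetric] by (cases I) auto
qed

lemma inj_power:
  fixes r :: "'a :: linordered_field"
  assumes "0 < r" "r \<noteq> 1"
  shows "inj (power r)"
proof (rule injI)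
  fix m n assume eq: "r ^ m = r ^ n"
  show "m = n"
  proof (cases "1 < r")
    case True
    then show ?thesis using eq by simp
  next
    case False
    then have "1 < 1 / r" using assms by (simp add: field_simps)
    moreover have "(1 / r) ^ m = (1 / r) ^ n" using eq by (simp add: power_one_over)
    ultimately show ?thesis by simp
  qed
qed

lemma sum_mset_powers_eq_digit_sum:
  fixes r :: rat
  assumes "inj (power r)" "set_mset M \<subseteq> power r ` {..<K}"
  shows "sum_mset M = (\<Sum>n<K. of_nat (count M (r ^ n)) * r ^ n)"
  using assms(2)
proof (induction M)
  case (add y M)
  then obtain e where e: "e < K" "y = r ^ e" by auto
  have count: "count (add_mset y M) (r ^ n) = count M (r ^ n) + (if n = e then 1 else 0)" for n
    using assms(1) e by (auto simp: inj_eq)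
  have "(\<Sum>n<K. of_nat (count (add_mset y M) (r ^ n)) * r ^ n)
      = (\<Sum>n<K. of_nat (count M (r ^ n)) * r ^ n + (if n = e then r ^ n else 0))"
    by (rule sum.cong[OF refl], subst count) (simp add: algebra_simps)
  also have "\<dots> = (\<Sum>n<K. of_nat (count M (r ^ n)) * r ^ n) + y"
    using e by (simp add: sum.distrib)
  finally show ?case using add by (simp add: add.commute)
qed simp

lemma horner_num_dvd: "\<forall>j\<le>n. a j = 0 \<Longrightarrow> P ^ Suc n dvd horner_num P Q a K"
proof (induction K)
  case (Suc K)
  show ?case
  proof (cases "K \<le> n")
    case False
    then have "P ^ Suc n dvd P ^ K" by (intro le_imp_power_dvd) simp
    then show ?thesis using Suc by simp
  qed (use Suc in simp)
qed simp

lemma mset_powers_bounded: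
  assumes "set_mset M \<subseteq> range (power r)"
  obtains K where "set_mset M \<subseteq> power r ` {..<K}"
proof -
  obtain C where C: "finite C" "set_mset M = power r ` C"
    using finite_subset_image[OF finite_set_mset assms] by blast
  then obtain K where "\<forall>n\<in>C. n < K" by (metis finite_nat_set_iff_bounded)
  with C have "set_mset M \<subseteq> power r ` {..<K}" by auto
  then show thesis by (rule that)
qed

locale lowest_terms =
  fixes r :: rat and P Q :: nat
  assumes coprime_PQ: "coprime P Q" and P_pos: "0 < P" and Q_pos: "0 < Q"
    and r_eq: "r = of_nat P / of_nat Q"
begin

lemma r_pos: "0 < r"
  using P_pos Q_pos r_eq by simp

lemma P_mult_power: "of_nat P * r ^ n = of_nat Q * r ^ Suc n"
proof -
  have "of_nat Q * r = of_nat P" using Q_pos r_eq by simp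
  then show ?thesis by (metis mult.assoc power_Suc)
qed

lemma horner_num_counts:
  assumes "inj (power r)" "set_mset M \<subseteq> power r ` {..<K}"
  shows "of_nat Q ^ K * sum_mset M = of_nat (Q * horner_num P Q (\<lambda>n. count M (r ^ n)) K)"
  unfolding sum_mset_powers_eq_digit_sum[OF assms] r_eq by (rule horner_num_eq_scaled_sum[OF Q_pos])

lemma mset_powers_eqI:
  assumes "r \<noteq> 1" "set_mset A \<subseteq> range (power r)" "set_mset B \<subseteq> range (power r)"
    and "sum_mset A = sum_mset B"
    and digits: "\<And>K. horner_num P Q (\<lambda>n. count A (r ^ n)) K = horner_num P Q (\<lambda>n. count B (r ^ n)) K
                   \<Longrightarrow> \<forall>n<K. count A (r ^ n) = count B (r ^ n)"
  shows "A = B"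
proof -
  have inj: "inj (power r)" using inj_power[OF r_pos assms(1)] .
  obtain K where "set_mset (A + B) \<subseteq> power r ` {..<K}"
    using mset_powers_bounded[of "A + B" r] assms(2,3) by auto
  then have K: "set_mset A \<subseteq> power r ` {..<K}" "set_mset B \<subseteq> power r ` {..<K}" by auto
  have "of_nat (Q * horner_num P Q (\<lambda>n. count A (r ^ n)) K)
      = (of_nat (Q * horner_num P Q (\<lambda>n. count B (r ^ n)) K) :: rat)"
    by (metis horner_num_counts[OF inj K(1)] horner_num_counts[OF inj K(2)] assms(4))
  then have "Q * horner_num P Q (\<lambda>n. count A (r ^ n)) K = Q * horner_num P Q (\<lambda>n. count B (r ^ n)) K"
    by (simp only: of_nat_eq_iff)
  then have below: "\<forall>n<K. count A (r ^ n) = count B (r ^ n)"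
    using Q_pos by (intro digits) simp
  have "count A (r ^ n) = count B (r ^ n)" for n
  proof (cases "n < K")
    case False
    then have "r ^ n \<notin> power r ` {..<K}" using inj by (auto simp: inj_eq)
    with K have "r ^ n \<notin># A" "r ^ n \<notin># B" by auto
    then show ?thesis by (simp add: not_in_iff)
  qed (use below in simp)
  then show ?thesis
    using assms(2,3) by (intro multiset_eqI) (metis count_eq_zero_iff imageE subsetD)
qed

lemma low_digits_mset_unique:
  assumes "r \<noteq> 1" "set_mset A \<subseteq> range (power r)" "set_mset B \<subseteq> range (power r)"
    "sum_mset A = sum_mset B" "\<forall>n. count A (r ^ n) < P" "\<forall>n. count B (r ^ n) < P"
  shows "A = B"
  using assms coprime_PQ
  by (intro mset_powers_eqI horner_num_low_digits_unique) auto

lemma high_digits_mset_unique: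
  assumes "r \<noteq> 1" "set_mset A \<subseteq> range (power r)" "set_mset B \<subseteq> range (power r)"
    "sum_mset A = sum_mset B" "\<forall>n>0. count A (r ^ n) < Q" "\<forall>n>0. count B (r ^ n) < Q"
  shows "A = B"
  using assms coprime_PQ
  by (intro mset_powers_eqI horner_num_high_digits_unique) auto

lemma power_in_atoms_if_gt:
  assumes "2 \<le> Q" "Q < P"
  shows "r ^ n \<in> atoms (Sr r)"
proof (rule power_in_atoms_SrI[OF r_pos])
  fix M assume M: "set_mset M \<subseteq> range (power r)" "sum_mset M = r ^ n" "\<forall>y\<in>#M. y < r ^ n"
  have r_gt: "1 < r" using assms r_eq by simp
  have sub: "set_mset M \<subseteq> power r ` {..<n}"
  proof
    fix y assume y: "y \<in># M"
    then obtain e where e: "y = r ^ e" using M(1) by auto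
    with y M(3) r_gt have "e < n" by (auto simp: power_strict_increasing_iff)
    with e show "y \<in> power r ` {..<n}" by auto
  qed
  have "of_nat (P ^ n) = (of_nat Q ^ n * sum_mset M :: rat)"
    using M(2) r_eq Q_pos by (simp add: power_divide)
  also have "\<dots> = of_nat (Q * horner_num P Q (\<lambda>j. count M (r ^ j)) n)"
    using horner_num_counts[OF inj_power sub] r_pos r_gt by simp
  finally have "Q dvd P ^ n" by (metis dvd_triv_left of_nat_eq_iff)
  moreover have "coprime Q (P ^ n)" using coprime_PQ by (simp add: coprime_commute)
  ultimately have "is_unit Q" using coprime_common_divisor[of Q "P ^ n" Q] by simp
  then show False using assms by simp
qed

lemma power_in_atoms_if_lt:
  assumes "2 \<le> P" "P < Q"
  shows "r ^ n \<in> atoms (Sr r)"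
proof (rule power_in_atoms_SrI[OF r_pos])
  fix M assume M: "set_mset M \<subseteq> range (power r)" "sum_mset M = r ^ n" "M \<noteq> {#}"
    "\<forall>y\<in>#M. y < r ^ n"
  have r_lt: "r < 1" using assms r_eq by simp
  obtain K where K: "set_mset M \<subseteq> power r ` {..<K}" using mset_powers_bounded[OF M(1)] by blast
  have exponents: "n < e" if "r ^ e \<in># M" for e
    using that M(4) r_pos r_lt by auto
  obtain e where "r ^ e \<in># M" "e < K" using M(3) K by fastforce
  with exponents have "n < K" by fastforce
  have "of_nat (Q ^ (K - n) * P ^ n) = (of_nat Q ^ K * sum_mset M :: rat)"
  proof -
    have "(of_nat Q :: rat) ^ K = of_nat Q ^ (K - n) * of_nat Q ^ n"
      using \<open>n < K\<close> by (simp add: power_add[symmetric])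
    then show ?thesis using M(2) r_eq Q_pos by (simp add: power_divide)
  qed
  also have "\<dots> = of_nat (Q * horner_num P Q (\<lambda>j. count M (r ^ j)) K)"
    using horner_num_counts[OF inj_power K] r_pos r_lt by simp
  finally have "Q ^ (K - n) * P ^ n = Q * horner_num P Q (\<lambda>j. count M (r ^ j)) K"
    by (simp only: of_nat_eq_iff)
  moreover have "P ^ Suc n dvd horner_num P Q (\<lambda>j. count M (r ^ j)) K"
    by (intro horner_num_dvd) (auto simp: count_eq_zero_iff dest: exponents)
  ultimately have "P ^ n * P dvd P ^ n * Q ^ (K - n)" by (simp add: mult.commute)
  then have "P dvd Q ^ (K - n)" using P_pos by simp
  moreover have "coprime P (Q ^ (K - n))" using coprime_PQ by simp
  ultimately have "is_unit P" using coprime_common_divisor[of P "Q ^ (K - n)" P] by simp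
  then show False using assms by simp
qed

end

lemma shifted_ratio_between:
  fixes a b m N :: real
  assumes "1 \<le> a" "a < b" "1 \<le> m" "b * m + (a - 1) * (b - 1) / (b - a) < N"
  obtains L :: nat where "a < (N + L) / (m + L)" "(N + L) / (m + L) < b"
proof -
  define C where "C = (a - 1) * (b - 1) / (b - a)"
  define t where "t = (N - b * m) / (b - 1)"
  define L :: nat where "L = nat \<lfloor>t\<rfloor> + 1"
  have b1: "1 < b" using assms by linarith
  have C: "0 \<le> C" "(b - a) * C = (a - 1) * (b - 1)" using assms by (simp_all add: C_def)
  have "m \<le> b * m" using b1 assms(3) by simp
  then have N: "m + C < N" "b * m \<le> N" using assms(4) C(1) by (simp_all add: C_def)
  then have "0 \<le> t" using b1 by (simp add: t_def)
  then have L: "t < L" "L \<le> t + 1" by (simp_all add: L_def) linarith+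
  have bt: "(b - 1) * t = N - b * m" using b1 by (simp add: t_def)
  have "N - b * m < (b - 1) * L" using mult_strict_left_mono[OF L(1), of "b - 1"] b1 bt by simp
  then have upper: "(N + L) / (m + L) < b"
    using assms(3) by (simp add: pos_divide_less_eq algebra_simps)
  \<comment> \<open>the lower bound needs \<open>(a - 1) (t + 1) < N - a m\<close>, i.e. \<open>(b - a) (N - m - C) > 0\<close>\<close>
  have "(b - 1) * ((a - 1) * (t + 1)) = (a - 1) * ((b - 1) * t) + (a - 1) * (b - 1)"
    by (simp add: algebra_simps)
  also have "\<dots> = (a - 1) * (N - b * m) + (b - a) * C" by (simp only: bt C(2))
  finally have "(b - 1) * (N - a * m) - (b - 1) * ((a - 1) * (t + 1)) = (b - a) * (N - m - C)"
    by (simp add: algebra_simps)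
  moreover have "0 < (b - a) * (N - m - C)" using N(1) assms(2) by simp
  ultimately have "(b - 1) * ((a - 1) * (t + 1)) < (b - 1) * (N - a * m)" by linarith
  then have "(a - 1) * (t + 1) < N - a * m" using b1 mult_less_cancel_left_pos[of "b - 1"] by simp
  moreover have "(a - 1) * L \<le> (a - 1) * (t + 1)" using L(2) assms(1) by (simp add: mult_left_mono)
  ultimately have "(a - 1) * L < N - a * m" by linarith
  then have lower: "a < (N + L) / (m + L)"
    using assms(3) by (simp add: pos_less_divide_eq algebra_simps)
  from lower upper show thesis by (rule that)
qed

locale lowest_terms_gt_1 = lowest_terms +
  assumes Q_ge_2: "2 \<le> Q" and Q_less_P: "Q < P"
begin

lemma r_gt_1: "1 < r"
  using Q_less_P Q_pos r_eq by simp

lemma factorizations_eq: "factorizations (Sr r) x = {f. set_mset f \<subseteq> range (power r) \<and> sum_mset f = x}"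
  using atoms_Sr_subset_powers[OF r_pos] power_in_atoms_if_gt[OF Q_ge_2 Q_less_P]
  by (auto simp: factorizations_def)

lemma size_factorization_le:
  assumes "f \<in> factorizations (Sr r) x"
  shows "of_nat (size f) \<le> x"
proof -
  have "1 \<le> y" if "y \<in># f" for y
  proof -
    from that assms obtain n where "y = r ^ n" by (auto simp: factorizations_eq)
    with r_gt_1 show ?thesis by simp
  qed
  with assms show ?thesis using size_le_sum_mset[of f] by (simp add: factorizations_eq)
qed

lemma lower_to_low_digits:
  "f \<in> factorizations (Sr r) x
   \<Longrightarrow> \<exists>g\<in>factorizations (Sr r) x. (\<forall>n. count g (r ^ n) < P) \<and> size g \<le> size f"
proof (induction "size f" arbitrary: f rule: less_induct)
  case less
  show ?case
  proof (cases "\<forall>n. count f (r ^ n) < P")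
    case False
    then obtain n where n: "P \<le> count f (r ^ n)" by (auto simp: not_less)
    let ?f = "f - replicate_mset P (r ^ n) + replicate_mset Q (r ^ Suc n)"
    have f: "?f \<in> factorizations (Sr r) x" "size ?f + P = size f + Q"
      using factorization_exchange[OF less.prems n P_mult_power power_in_atoms_if_gt[OF Q_ge_2 Q_less_P]]
      by auto
    then have "size ?f < size f" using Q_less_P by simp
    with f(1) less.hyps obtain g where "g \<in> factorizations (Sr r) x" "\<forall>n. count g (r ^ n) < P"
      "size g \<le> size ?f" by blast
    with \<open>size ?f < size f\<close> show ?thesis by force
  qed (use less.prems in blast)
qed

lemma raise_to_high_digits:
  assumes "f \<in> factorizations (Sr r) x"
  shows "\<exists>g\<in>factorizations (Sr r) x. (\<forall>n>0. count g (r ^ n) < Q) \<and> size f \<le> size g"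
  using assms
\<comment> \<open>lengths of factorizations of \<open>x\<close> are bounded by \<open>x\<close>, every power of \<open>r\<close> being \<open>\<ge> 1\<close>\<close>
proof (induction "nat \<lfloor>x\<rfloor> - size f" arbitrary: f rule: less_induct)
  case less
  show ?case
  proof (cases "\<forall>n>0. count f (r ^ n) < Q")
    case False
    then obtain n where "0 < n" "Q \<le> count f (r ^ n)" by (auto simp: not_less)
    then obtain m where m: "Q \<le> count f (r ^ Suc m)" by (cases n) auto
    let ?f = "f - replicate_mset Q (r ^ Suc m) + replicate_mset P (r ^ m)"
    have f: "?f \<in> factorizations (Sr r) x" "size ?f + Q = size f + P"
      using factorization_exchange[OF less.prems m P_mult_power[symmetric] power_in_atoms_if_gt[OF Q_ge_2 Q_less_P]]
      by auto
    have "int (size ?f) \<le> \<lfloor>x\<rfloor>" using size_factorization_le[OF f(1)] by (simp add: le_floor_iff)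
    then have "nat (int (size ?f)) \<le> nat \<lfloor>x\<rfloor>" by (rule nat_mono)
    then have "size ?f \<le> nat \<lfloor>x\<rfloor>" by (simp only: nat_int)
    moreover have "size f < size ?f" using f(2) Q_less_P by linarith
    ultimately have "nat \<lfloor>x\<rfloor> - size ?f < nat \<lfloor>x\<rfloor> - size f" by linarith
    with f(1) less.hyps obtain g where "g \<in> factorizations (Sr r) x" "\<forall>n>0. count g (r ^ n) < Q"
      "size ?f \<le> size g" by blast
    with \<open>size f < size ?f\<close> show ?thesis by (meson less_imp_le order_trans)
  qed (use less.prems in blast)
qed

lemma low_digits_min_length:
  assumes "g \<in> factorizations (Sr r) x" "\<forall>n. count g (r ^ n) < P" "f \<in> factorizations (Sr r) x"
  shows "size g \<le> size f"
proof -
  obtain g' where g': "g' \<in> factorizations (Sr r) x" "\<forall>n. count g' (r ^ n) < P" "size g' \<le> size f"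
    using lower_to_low_digits[OF assms(3)] by blast
  have "g' = g"
    using g' assms(1,2) r_gt_1 by (intro low_digits_mset_unique) (auto simp: factorizations_eq)
  with g' show ?thesis by simp
qed

lemma high_digits_max_length:
  assumes "g \<in> factorizations (Sr r) x" "\<forall>n>0. count g (r ^ n) < Q" "f \<in> factorizations (Sr r) x"
  shows "size f \<le> size g"
proof -
  obtain g' where g': "g' \<in> factorizations (Sr r) x" "\<forall>n>0. count g' (r ^ n) < Q" "size f \<le> size g'"
    using raise_to_high_digits[OF assms(3)] by blast
  have "g' = g"
    using g' assms(1,2) r_gt_1 by (intro high_digits_mset_unique) (auto simp: factorizations_eq)
  with g' show ?thesis by simp
qed

lemma elasticity_by_digits:
  assumes "x \<noteq> 0"
    and "f \<in> factorizations (Sr r) x" "\<forall>n. count f (r ^ n) < P"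
    and "g \<in> factorizations (Sr r) x" "\<forall>n>0. count g (r ^ n) < Q"
  shows "elasticity (Sr r) x = ereal (real (size g) / real (size f))"
  using assms low_digits_min_length high_digits_max_length by (intro elasticity_eq_ratio) blast+

lemma shifted_ratio_in_elasticity_set:
  assumes "f0 \<in> factorizations (Sr r) (of_nat N)" "\<forall>n. count f0 (r ^ n) < P"
    and "set_mset f0 \<subseteq> power r ` {..<s}" "0 < N"
  shows "ereal (real (N + L) / real (size f0 + L)) \<in> elasticity_set (Sr r)"
proof -
  define D where "D = mset_set (power r ` {s..<s + L})"
  have count_D: "count D (r ^ n) = (if s \<le> n \<and> n < s + L then 1 else 0)" for n
    using inj_power[OF r_pos] r_gt_1 by (simp add: D_def inj_image_mem_iff)
  have "size D = L"
    using inj_power[OF r_pos] r_gt_1 by (simp add: D_def card_image inj_on_subset)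
  \<comment> \<open>\<open>N + sum_mset D\<close> has the high-digit factorization \<open>N\<close> ones plus \<open>D\<close>
    and the low-digit factorization \<open>f0 + D\<close>\<close>
  define x where "x = of_nat N + sum_mset D"
  define f where "f = f0 + D"
  define g where "g = replicate_mset N 1 + D"
  have D_powers: "set_mset D \<subseteq> range (power r)" by (auto simp: D_def)
  have f: "f \<in> factorizations (Sr r) x" "\<forall>n. count f (r ^ n) < P"
  proof -
    show "f \<in> factorizations (Sr r) x" using assms(1) D_powers by (auto simp: f_def x_def factorizations_eq)
    have "count f0 (r ^ n) = 0" if "s \<le> n" for n
      using assms(3) inj_power[OF r_pos] r_gt_1 that by (auto simp: count_eq_zero_iff inj_eq)
    then show "\<forall>n. count f (r ^ n) < P"
      using assms(2) count_D Q_ge_2 Q_less_P by (auto simp: f_def)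
  qed
  have g: "g \<in> factorizations (Sr r) x" "\<forall>n>0. count g (r ^ n) < Q"
  proof -
    have "1 \<in> range (power r)" by (metis power_0 rangeI)
    then show "g \<in> factorizations (Sr r) x" using D_powers by (auto simp: g_def x_def factorizations_eq)
    have "r ^ n \<noteq> 1" if "0 < n" for n using one_less_power[OF r_gt_1 that] by simp
    then show "\<forall>n>0. count g (r ^ n) < Q" using count_D Q_ge_2 by (auto simp: g_def)
  qed
  have "0 \<le> sum_mset D" using D_powers r_pos by (intro sum_mset_nonneg) auto
  moreover have "0 < (of_nat N :: rat)" using assms(4) by simp
  ultimately have "x \<noteq> 0" unfolding x_def by linarith
  then have "elasticity (Sr r) x = ereal (real (size g) / real (size f))"
    using elasticity_by_digits f g by blast
  moreover have "x \<in> Sr r" using g(1) by (auto simp: factorizations_eq intro: sum_mset_in_Sr)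
  ultimately show ?thesis using \<open>size D = L\<close> by (force simp: elasticity_set_def f_def g_def)
qed

lemma shifted_ratios_in_elasticity_set:
  obtains m where "1 \<le> m" "m \<le> Q ^ k"
    "\<And>L. ereal (real (P ^ k + L) / real (m + L)) \<in> elasticity_set (Sr r)"
proof -
  have "of_nat (Q ^ k) * r ^ k = of_nat (P ^ k)"
    using Q_pos r_eq by (simp add: power_divide)
  then have "replicate_mset (Q ^ k) (r ^ k) \<in> factorizations (Sr r) (of_nat (P ^ k))"
    by (simp add: factorizations_eq)
  then obtain f0 where f0: "f0 \<in> factorizations (Sr r) (of_nat (P ^ k))" "\<forall>n. count f0 (r ^ n) < P"
    "size f0 \<le> Q ^ k"
    using lower_to_low_digits by fastforce
  have "0 < size f0" using factorization_nonempty[OF f0(1)] P_pos by simp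
  have "set_mset f0 \<subseteq> range (power r)" using f0(1) by (simp add: factorizations_eq)
  then obtain s where "set_mset f0 \<subseteq> power r ` {..<s}" by (rule mset_powers_bounded)
  with f0 have "ereal (real (P ^ k + L) / real (size f0 + L)) \<in> elasticity_set (Sr r)" for L
    using P_pos by (intro shifted_ratio_in_elasticity_set) auto
  with f0(3) \<open>0 < size f0\<close> show thesis by (intro that[of "size f0"]) auto
qed

lemma dense_elasticities: "dense_in_ge1 (real_of_ereal ` (elasticity_set (Sr r) - {\<infinity>}))"
  unfolding dense_in_ge1_def
proof (intro allI impI)
  fix a b :: real assume ab: "1 \<le> a \<and> a < b"
  define C where "C = (a - 1) * (b - 1) / (b - a)"
  have "0 \<le> C" using ab by (simp add: C_def)
  have "1 < real P / real Q" using Q_less_P Q_pos by simp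
  then obtain k where k: "b + C < (real P / real Q) ^ k" using real_arch_pow by blast
  obtain m where m: "1 \<le> m" "m \<le> Q ^ k"
    and in_set: "\<And>L. ereal (real (P ^ k + L) / real (m + L)) \<in> elasticity_set (Sr r)"
    using shifted_ratios_in_elasticity_set[where k = k] by blast
  have Qk: "1 \<le> real Q ^ k" using Q_pos by simp
  have "b * real m + C \<le> (b + C) * real Q ^ k"
    using m ab \<open>0 \<le> C\<close> Qk
    by (simp add: algebra_simps add_mono mult_left_mono mult_le_cancel_left1 flip: of_nat_power)
  also have "\<dots> < (real P / real Q) ^ k * real Q ^ k"
    using Q_pos by (intro mult_strict_right_mono[OF k]) simp
  also have "\<dots> = real (P ^ k)" using Q_pos by (simp add: power_divide)
  finally obtain L :: nat where L: "a < (real (P ^ k) + L) / (real m + L)" "(real (P ^ k) + L) / (real m + L) < b"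
    using shifted_ratio_between[of a b "real m" "real (P ^ k)"] ab m C_def by auto
  have "real (P ^ k + L) / real (m + L) \<in> real_of_ereal ` (elasticity_set (Sr r) - {\<infinity>})"
    using in_set[of L] by force
  with L show "\<exists>y\<in>real_of_ereal ` (elasticity_set (Sr r) - {\<infinity>}). a < y \<and> y < b" by auto
qed

end

locale lowest_terms_lt_1 = lowest_terms +
  assumes P_less_Q: "P < Q"
begin

lemma r_less_1: "r < 1"
  using P_less_Q P_pos r_eq by simp

lemma two_le_P_if_power_atom:
  assumes "r ^ n \<in> atoms (Sr r)"
  shows "2 \<le> P"
proof (rule ccontr)
  assume "\<not> 2 \<le> P"
  with P_pos have "P = 1" by simp
  then have "r ^ n = r ^ Suc n + of_nat (Q - 1) * r ^ Suc n"
    using P_mult_power[of n] P_less_Q by (simp add: of_nat_diff algebra_simps)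
  moreover have "r ^ Suc n \<noteq> 0" "of_nat (Q - 1) * r ^ Suc n \<noteq> 0"
    using r_pos P_less_Q \<open>P = 1\<close> by auto
  ultimately show False
    using assms power_in_Sr of_nat_mult_power_in_Sr unfolding atoms_def by blast
qed

lemma unbounded_lengths_if_digit_ge_P:
  assumes "f \<in> factorizations (Sr r) x" "P \<le> count f (r ^ n)"
  shows "\<exists>h\<in>factorizations (Sr r) x. N \<le> size h"
proof -
  have "0 < count f (r ^ n)" using assms(2) P_pos by linarith
  then have "r ^ n \<in> atoms (Sr r)" using assms(1) by (auto simp: factorizations_def)
  then have atoms: "r ^ j \<in> atoms (Sr r)" for j
    using power_in_atoms_if_lt two_le_P_if_power_atom P_less_Q by blast
  have "\<exists>h\<in>factorizations (Sr r) x. P \<le> count h (r ^ (n + j)) \<and> size f + j \<le> size h" for j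
  proof (induction j)
    case 0
    show ?case using assms by auto
  next
    case (Suc j)
    then obtain h where h: "h \<in> factorizations (Sr r) x" "P \<le> count h (r ^ (n + j))"
      "size f + j \<le> size h" by blast
    let ?h = "h - replicate_mset P (r ^ (n + j)) + replicate_mset Q (r ^ Suc (n + j))"
    have "?h \<in> factorizations (Sr r) x" "size ?h + P = size h + Q"
      using factorization_exchange[OF h(1,2) P_mult_power atoms] by auto
    moreover have "P \<le> count ?h (r ^ (n + Suc j))" using P_less_Q by simp
    ultimately show ?case using h(3) P_less_Q by (intro bexI[of _ ?h]) auto
  qed
  then show ?thesis by (meson le_add2 order_trans)
qed

lemma elasticity_one_or_infinity:
  assumes "atomic_monoid (Sr r)" "x \<in> Sr r"
  shows "elasticity (Sr r) x \<in> {1, \<infinity>}"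
proof (cases "x = 0")
  case False
  with assms obtain f where f: "f \<in> factorizations (Sr r) x" by (auto simp: atomic_monoid_def)
  show ?thesis
  proof (cases "\<exists>h\<in>factorizations (Sr r) x. \<exists>n. P \<le> count h (r ^ n)")
    case True
    then have "elasticity (Sr r) x = \<infinity>"
      using elasticity_eq_infinity[OF False f] unbounded_lengths_if_digit_ge_P by blast
    then show ?thesis by simp
  next
    case False
    then have "h = f" if "h \<in> factorizations (Sr r) x" for h
      using that f r_less_1 factorization_Sr_powers[OF r_pos]
      by (intro low_digits_mset_unique) (auto simp: not_le)
    then have "elasticity (Sr r) x = 1" using elasticity_eq_one[OF \<open>x \<noteq> 0\<close> f] by blast
    then show ?thesis by simp
  qed
qed (simp add: elasticity_def)

end

lemma atoms_Sr_Nats: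
  assumes "r \<in> \<nat>"
  shows "atoms (Sr r) \<subseteq> {1}"
proof
  have Nats: "y \<in> \<nat>" if "y \<in> Sr r" for y
    using that
  proof (induction rule: Sr.induct)
    case (add_pow y n)
    have "r ^ n \<in> \<nat>" using assms by (induction n) simp_all
    with add_pow show ?case by simp
  qed simp
  fix a assume a: "a \<in> atoms (Sr r)"
  then have "a \<in> \<nat>" "a \<noteq> 0" using Nats by (auto simp: atoms_def)
  then obtain k where k: "a = of_nat k" "k \<noteq> 0" by (auto elim: Nats_cases)
  have "k = 1"
  proof (rule ccontr)
    assume "k \<noteq> 1"
    then have "a = 1 + of_nat (k - 1)" "(of_nat (k - 1) :: rat) \<noteq> 0"
      using k by (auto simp: of_nat_diff)
    moreover have "(1 :: rat) \<in> Sr r" "of_nat (k - 1) \<in> Sr r"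
      using of_nat_mult_power_in_Sr[of 1 r 0] of_nat_mult_power_in_Sr[of "k - 1" r 0] by simp_all
    ultimately have "\<exists>b\<in>Sr r. \<exists>c\<in>Sr r. b \<noteq> 0 \<and> c \<noteq> 0 \<and> a = b + c"
      by (intro bexI[of _ 1] bexI[of _ "of_nat (k - 1)"]) simp_all
    with a show False unfolding atoms_def by blast
  qed
  with k show "a \<in> {1}" by simp
qed

lemma elasticity_Sr_Nats:
  assumes "r \<in> \<nat>" "atomic_monoid (Sr r)" "x \<in> Sr r"
  shows "elasticity (Sr r) x = 1"
proof (cases "x = 0")
  case False
  have length: "of_nat (size h) = x" if "h \<in> factorizations (Sr r) x" for h
  proof -
    have "set_mset h \<subseteq> {1}" using that atoms_Sr_Nats[OF assms(1)] by (auto simp: factorizations_def)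
    then have "sum_mset h = of_nat (size h)" by (induction h) auto
    then show ?thesis using that by (simp add: factorizations_def)
  qed
  obtain f where f: "f \<in> factorizations (Sr r) x" using assms(2,3) False by (auto simp: atomic_monoid_def)
  have "size h = size f" if "h \<in> factorizations (Sr r) x" for h
    using length[OF that] length[OF f] by simp
  then show ?thesis by (rule elasticity_eq_one[OF False f])
qed (simp add: elasticity_def)

lemma not_dense_if_elasticities_trivial:
  assumes "\<And>x. x \<in> S \<Longrightarrow> elasticity S x \<in> {1, \<infinity>}"
  shows "\<not> dense_in_ge1 (real_of_ereal ` (elasticity_set S - {\<infinity>}))"
proof -
  have "y = 1" if "y \<in> real_of_ereal ` (elasticity_set S - {\<infinity>})" for y
  proof -
    from that obtain x where "x \<in> S" "elasticity S x \<noteq> \<infinity>" "y = real_of_ereal (elasticity S x)"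
      by (auto simp: elasticity_set_def)
    with assms show ?thesis by fastforce
  qed
  then show ?thesis unfolding dense_in_ge1_def by (metis less_irrefl one_less_numeral_iff order_refl semiring_norm(76))
qed

lemma lowest_terms_exists:
  assumes "0 < r"
  obtains P Q where "lowest_terms r P Q"
proof -
  obtain p q where pq: "quotient_of r = (p, q)" by (cases "quotient_of r")
  have "0 < q" "coprime p q" "r = of_int p / of_int q"
    using quotient_of_denom_pos[OF pq] quotient_of_coprime[OF pq] quotient_of_div[OF pq] by auto
  moreover from this assms have "0 < p" by (simp add: zero_less_divide_iff)
  ultimately have "lowest_terms r (nat p) (nat q)"
    by unfold_locales (simp_all add: coprime_int_iff[symmetric])
  then show thesis by (rule that)
qed

context lowest_terms
begin

lemma elasticity_trivial_unless_noninteger_gt_1: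
  assumes "\<not> (1 < r \<and> r \<notin> \<nat>)" "atomic_monoid (Sr r)" "x \<in> Sr r"
  shows "elasticity (Sr r) x \<in> {1, \<infinity>}"
proof (cases "r \<in> \<nat>")
  case False
  with assms(1) have "r < 1" by (cases "r < 1") (auto simp: not_less le_less)
  then interpret lowest_terms_lt_1 r P Q
    by unfold_locales (use r_eq Q_pos in \<open>simp add: divide_less_eq\<close>)
  show ?thesis using elasticity_one_or_infinity[OF assms(2,3)] .
qed (use elasticity_Sr_Nats assms in blast)

lemma lowest_terms_gt_1I:
  assumes "1 < r" "r \<notin> \<nat>"
  shows "lowest_terms_gt_1 r P Q"
proof unfold_locales
  show "2 \<le> Q" using assms(2) Q_pos r_eq by (cases "Q = 1") auto
  show "Q < P" using assms(1) Q_pos r_eq by (simp add: less_divide_eq)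
qed

end

theorem corollary4p6:
  fixes r :: rat
  assumes "r > 0"
    and "atomic_monoid (Sr r)"
  shows "dense_in_ge1 (real_of_ereal ` (elasticity_set (Sr r) - {\<infinity>}))
     \<longleftrightarrow> (r > 1 \<and> r \<notin> \<nat>)"
proof -
  obtain P Q where "lowest_terms r P Q" using lowest_terms_exists[OF assms(1)] .
  then interpret lowest_terms r P Q .
  show ?thesis
  proof
    assume "dense_in_ge1 (real_of_ereal ` (elasticity_set (Sr r) - {\<infinity>}))"
    then show "r > 1 \<and> r \<notin> \<nat>"
      using not_dense_if_elasticities_trivial elasticity_trivial_unless_noninteger_gt_1 assms(2) by blast
  next
    assume "r > 1 \<and> r \<notin> \<nat>"
    then interpret lowest_terms_gt_1 r P Q by (intro lowest_terms_gt_1I) auto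
    show "dense_in_ge1 (real_of_ereal ` (elasticity_set (Sr r) - {\<infinity>}))" by (rule dense_elasticities)
  qed
qed

end
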